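(* Let $\rho_{AB},\tau_{AB}\in\mathcal{S}_{\leq}(\mathcal{H}_A\otimes\mathcal{H}_B)$, $d_A=\dim\mathcal{H}_A$, $d_{\min}=\min\{d_A,\dim\mathcal{H}_B\}$, and $\delta:=\bar D(\rho_{AB},\tau_{AB})$. Then $$\big|H_{\min}(A|B)_\rho-H_{\min}(A|B)_\tau\big|\leq\frac{d_A\,d_{\min}\,\delta}{\ln 2\cdot\min\{\mathrm{tr}\,\rho_{AB},\mathrm{tr}\,\tau_{AB}\}}.$$
   Context: Hilbert spaces finite-dimensional; $\mathcal{S}_=(\mathcal{H})$: normalized states; $\mathcal{S}_{\leq}(\mathcal{H})=\{\rho\geq0:0<\mathrm{tr}\,\rho\leq1\}$. Logs base 2. $H_{\min}(A|B)_\rho=\max_{\sigma_B\in\mathcal{S}_=(\mathcal{H}_B)}\sup\{\lambda : 2^{-\lambda}\mathbb{1}_A\otimes\sigma_B\geq\rho_{AB}\}$. Generalized trace distance $\bar D(\rho,\tau)=\max\{\mathrm{tr}\{\rho-\tau\}_+,\mathrm{tr}\{\tau-\rho\}_+\}$, with $\{X\}_+$ the positive part of $X$. *)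

theory Defs
  imports "HOL-Analysis.Analysis"
begin

text \<open>Finite-dimensional Hilbert spaces are modelled as complex^'n for a finite
  index type 'n; operators are complex^'n^'n matrices.  The bipartite space
  H_A (x) H_B is indexed by the product type 'a \<times> 'b.\<close>

definition psd :: "complex^'n^'n \<Rightarrow> bool" where
  "psd M \<longleftrightarrow> (\<forall>i j. M$i$j = cnj (M$j$i)) \<and>
     (\<forall>v::complex^'n. 0 \<le> Re (\<Sum>i\<in>UNIV. \<Sum>j\<in>UNIV. cnj (v$i) * M$i$j * v$j))"

definition norm_state :: "complex^'n^'n \<Rightarrow> bool" where
  "norm_state M \<longleftrightarrow> psd M \<and> trace M = 1"

definition subnorm_state :: "complex^'n^'n \<Rightarrow> bool" where
  "subnorm_state M \<longleftrightarrow> psd M \<and> 0 < Re (trace M) \<and> Re (trace M) \<le> 1"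

definition id_tensor :: "complex^('b::finite)^'b \<Rightarrow> complex^('a::finite \<times> 'b)^('a \<times> 'b)" where
  "id_tensor \<sigma> = (\<chi> p q. if fst p = fst q then \<sigma>$(snd p)$(snd q) else 0)"

text \<open>Positive part {X}_+ of a Hermitian operator X: the unique P with
  P >= 0, P - X >= 0 and P (P - X) = 0 (Jordan decomposition X = P - (P - X)
  into orthogonally supported positive parts).\<close>
definition pos_part :: "complex^'n^'n \<Rightarrow> complex^'n^'n" where
  "pos_part X = (THE P. psd P \<and> psd (P - X) \<and> P ** (P - X) = 0)"

definition gen_trace_dist :: "complex^'n^'n \<Rightarrow> complex^'n^'n \<Rightarrow> real" where
  "gen_trace_dist \<rho> \<tau> = max (Re (trace (pos_part (\<rho> - \<tau>)))) (Re (trace (pos_part (\<tau> - \<rho>))))"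

text \<open>The max over sigma of the sup equals the sup over the union.\<close>
definition Hmin :: "complex^('a::finite \<times> 'b::finite)^('a \<times> 'b) \<Rightarrow> real" where
  "Hmin \<rho> = Sup {l::real. \<exists>\<sigma>::complex^'b^'b. norm_state \<sigma> \<and>
       psd ((2 powr (-l)) *\<^sub>R (id_tensor \<sigma> :: complex^('a \<times> 'b)^('a \<times> 'b)) - \<rho>)}"

end

theory Submission
  imports Defs
begin

text \<open>Suppose 2^(-l) (1 \<otimes> \<sigma>) \<ge> \<rho>, and \<tau> - \<rho> \<le> 1 \<otimes> \<omega> for some \<omega> \<ge> 0. Normalising
  2^(-l) \<sigma> + \<omega> gives a state \<sigma>' with (2^(-l) + tr \<omega>) (1 \<otimes> \<sigma>') \<ge> \<tau>, so
  H_min(A|B)_\<tau> \<ge> l - log(1 + 2^l tr \<omega>) \<ge> l - 2^l tr \<omega> / ln 2, and taking traces in the first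
  inequality gives 2^l \<le> d_A / tr \<rho>. As \<omega> one may take any operator dominating the positive
  part P of \<tau> - \<rho>: either tr P \<cdot> 1_B, because P \<le> tr P \<cdot> 1, or d_A tr_A P, because splitting a
  vector into its d_A blocks and using Cauchy-Schwarz gives P \<le> d_A (1_A \<otimes> tr_A P); the cheaper
  of the two has trace d_min tr P. The positive part exists by the spectral theorem, obtained by
  maximising the Rayleigh quotient on orthogonal complements of eigenvectors.\<close>

section \<open>Inner product, Hermitian matrices and quadratic forms\<close>

definition cinner :: "complex^'n \<Rightarrow> complex^'n \<Rightarrow> complex" where
  "cinner u v = (\<Sum>i\<in>UNIV. cnj (u$i) * v$i)"

definition qform :: "complex^'n^'n \<Rightarrow> complex^'n \<Rightarrow> real" where
  "qform M v = Re (cinner v (M *v v))"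

definition hermitian :: "complex^'n^'n \<Rightarrow> bool" where
  "hermitian M \<longleftrightarrow> (\<forall>i j. M$i$j = cnj (M$j$i))"

lemma cinner_zero_left [simp]: "cinner 0 v = 0"
  and cinner_zero_right [simp]: "cinner v 0 = 0"
  by (simp_all add: cinner_def)

lemma cinner_add_left: "cinner (u + v) w = cinner u w + cinner v w"
  and cinner_add_right: "cinner u (v + w) = cinner u v + cinner u w"
  and cinner_diff_right: "cinner u (v - w) = cinner u v - cinner u w"
  by (simp_all add: cinner_def algebra_simps sum.distrib sum_subtractf)

lemma cinner_minus_right: "cinner u (- v) = - cinner u v"
  by (simp add: cinner_def sum_negf)

lemma cinner_scale_left: "cinner (c *s u) v = cnj c * cinner u v"
  and cinner_scale_right: "cinner u (c *s v) = c * cinner u v"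
  by (simp_all add: cinner_def sum_distrib_left mult_ac)

lemma cinner_sum_left: "cinner (\<Sum>k\<in>K. f k) v = (\<Sum>k\<in>K. cinner (f k) v)"
  by (induct K rule: infinite_finite_induct) (simp_all add: cinner_add_left)

lemma cinner_sum_right: "cinner u (\<Sum>k\<in>K. f k) = (\<Sum>k\<in>K. cinner u (f k))"
  by (induct K rule: infinite_finite_induct) (simp_all add: cinner_add_right)

lemma cinner_matrix_vector_mult:
  "cinner u (M *v v) = (\<Sum>i\<in>UNIV. \<Sum>j\<in>UNIV. cnj (u$i) * M$i$j * v$j)"
  by (simp add: cinner_def matrix_vector_mult_def sum_distrib_left mult.assoc)

lemma cnj_cinner: "cnj (cinner u v) = cinner v u"
  by (simp add: cinner_def mult.commute)

lemma cinner_self: "cinner u u = of_real ((norm u)\<^sup>2)"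
proof -
  have "cinner u u = (\<Sum>i\<in>UNIV. of_real ((cmod (u$i))\<^sup>2))"
    unfolding cinner_def by (intro sum.cong refl) (metis complex_norm_square mult.commute)
  then show ?thesis
    by (simp add: norm_vec_def L2_set_def sum_nonneg)
qed

lemma cinner_self_eq_0 [simp]: "cinner u u = 0 \<longleftrightarrow> u = 0"
  by (simp add: cinner_self)

lemma scaleR_vec_eq_smult: "c *\<^sub>R (v::complex^'n) = complex_of_real c *s v"
  by (simp only: vec_eq_iff vector_scaleR_component vector_smult_component)
    (simp add: scaleR_conv_of_real)

lemma cinner_scaleR_left: "cinner (c *\<^sub>R u) v = of_real c * cinner u v"
  by (simp add: scaleR_vec_eq_smult cinner_scale_left)

lemma matrix_scaleR_nth: "((c::real) *\<^sub>R (A::complex^'n^'m))$i$j = of_real c * A$i$j"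
  by (simp only: vector_scaleR_component) (simp add: scaleR_conv_of_real)

lemma matrix_vector_mult_smult: "(A::complex^'n^'m) *v (c *s x) = c *s (A *v x)"
  by (simp add: vec_eq_iff matrix_vector_mult_def sum_distrib_left mult.left_commute)

lemma matrix_scaleR_vector_mult: "((c::real) *\<^sub>R (A::complex^'n^'m)) *v x = c *\<^sub>R (A *v x)"
  by (simp add: vec_eq_iff matrix_vector_mult_def matrix_scaleR_nth scaleR_vec_eq_smult
      sum_distrib_left mult.assoc)

lemma matrix_vector_mult_sum: "(A::complex^'n^'m) *v (\<Sum>k\<in>K. f k) = (\<Sum>k\<in>K. A *v f k)"
  by (induct K rule: infinite_finite_induct) (simp_all add: matrix_vector_right_distrib)

lemma matrix_sum_vector_mult: "(\<Sum>k\<in>K. (f k::complex^'n^'m)) *v x = (\<Sum>k\<in>K. f k *v x)"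
  by (induct K rule: infinite_finite_induct) (simp_all add: matrix_vector_mult_add_rdistrib)

lemma hermitian_cinner:
  assumes "hermitian M"
  shows "cinner u (M *v v) = cinner (M *v u) v"
proof -
  have "cinner u (M *v v) = (\<Sum>i\<in>UNIV. \<Sum>j\<in>UNIV. cnj (u$i) * M$i$j * v$j)"
    by (rule cinner_matrix_vector_mult)
  also have "\<dots> = (\<Sum>j\<in>UNIV. \<Sum>i\<in>UNIV. cnj (u$i) * M$i$j * v$j)"
    by (rule sum.swap)
  also have "\<dots> = (\<Sum>j\<in>UNIV. \<Sum>i\<in>UNIV. cnj (M$j$i * u$i) * v$j)"
  proof (intro sum.cong refl)
    fix i j
    have "M$i$j = cnj (M$j$i)"
      using assms hermitian_def by blast
    then show "cnj (u$i) * M$i$j * v$j = cnj (M$j$i * u$i) * v$j"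
      by simp
  qed
  also have "\<dots> = cinner (M *v u) v"
    by (simp add: cinner_def matrix_vector_mult_def sum_distrib_right)
  finally show ?thesis .
qed

lemma hermitian_add: "hermitian A \<Longrightarrow> hermitian B \<Longrightarrow> hermitian (A + B)"
  unfolding hermitian_def by (metis complex_cnj_add vector_add_component)

lemma hermitian_diff: "hermitian A \<Longrightarrow> hermitian B \<Longrightarrow> hermitian (A - B)"
  unfolding hermitian_def by (metis complex_cnj_diff vector_minus_component)

lemma hermitian_scaleR: "hermitian A \<Longrightarrow> hermitian ((c::real) *\<^sub>R A)"
  unfolding hermitian_def by (metis matrix_scaleR_nth complex_cnj_mult complex_cnj_complex_of_real)

lemma hermitian_mat1: "hermitian (mat 1 :: complex^'n^'n)"
  by (simp add: hermitian_def mat_def)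

lemma qform_add_matrix: "qform (A + B) v = qform A v + qform B v"
  and qform_diff_matrix: "qform (A - B) v = qform A v - qform B v"
  and qform_scaleR_matrix: "qform ((c::real) *\<^sub>R A) v = c * qform A v"
  by (simp_all add: qform_def matrix_vector_mult_add_rdistrib matrix_vector_mult_diff_rdistrib
      matrix_scaleR_vector_mult scaleR_vec_eq_smult cinner_add_right cinner_diff_right cinner_scale_right)

lemma qform_mat1: "qform (mat 1) v = (norm v)\<^sup>2"
  by (simp add: qform_def cinner_self)

lemma qform_smult: "qform P (c *s v) = (cmod c)\<^sup>2 * qform P v"
proof -
  have "cinner (c *s v) (P *v (c *s v)) = (cnj c * c) * cinner v (P *v v)"
    by (simp add: matrix_vector_mult_smult cinner_scale_left cinner_scale_right)
  then show ?thesis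
    by (simp add: qform_def mult.commute flip: complex_norm_square)
qed

lemma qform_scaleR: "qform P ((c::real) *\<^sub>R v) = c\<^sup>2 * qform P v"
  by (simp add: scaleR_vec_eq_smult qform_smult)

lemma qform_add:
  assumes "hermitian X"
  shows "qform X (v + w) = qform X v + qform X w + 2 * Re (cinner w (X *v v))"
proof -
  have "cinner v (X *v w) = cnj (cinner w (X *v v))"
    by (simp add: cnj_cinner hermitian_cinner[OF assms])
  then have "Re (cinner v (X *v w)) = Re (cinner w (X *v v))"
    by simp
  then show ?thesis
    by (simp add: qform_def matrix_vector_right_distrib cinner_add_left cinner_add_right)
qed

lemma continuous_on_qform: "continuous_on A (qform X)"
  unfolding qform_def[abs_def] cinner_matrix_vector_mult by (intro continuous_intros)

section \<open>Positive semidefinite matrices\<close>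

lemma psd_iff_qform: "psd M \<longleftrightarrow> hermitian M \<and> (\<forall>v. 0 \<le> qform M v)"
  by (simp add: psd_def hermitian_def qform_def cinner_matrix_vector_mult)

lemma psd_hermitian: "psd M \<Longrightarrow> hermitian M"
  and psd_qform_nonneg: "psd M \<Longrightarrow> 0 \<le> qform M v"
  by (simp_all add: psd_iff_qform)

lemma psd_add: "psd A \<Longrightarrow> psd B \<Longrightarrow> psd (A + B)"
  by (simp add: psd_iff_qform hermitian_add qform_add_matrix)

lemma psd_scaleR: "psd A \<Longrightarrow> 0 \<le> c \<Longrightarrow> psd ((c::real) *\<^sub>R A)"
  by (simp add: psd_iff_qform hermitian_scaleR qform_scaleR_matrix)

lemma psd_diff_trans: "psd (A - B) \<Longrightarrow> psd (B - C) \<Longrightarrow> psd (A - C)"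
  using psd_add[of "A - B" "B - C"] by simp

lemma psd_zero: "psd 0"
  by (simp add: psd_def)

lemma psd_sum: "(\<And>k. k \<in> K \<Longrightarrow> psd (f k)) \<Longrightarrow> psd (\<Sum>k\<in>K. f k)"
  by (induct K rule: infinite_finite_induct) (simp_all add: psd_add psd_zero)

lemma psd_mat1: "psd (mat 1)"
  by (simp add: psd_iff_qform hermitian_mat1 qform_mat1)

lemma qform_axis: "qform (P::complex^'n^'n) (axis i 1) = Re (P$i$i)"
proof -
  have "cinner (axis i 1) w = w$i" for w :: "complex^'n"
    unfolding cinner_def by (subst sum.remove[of _ i]) (auto simp: axis_def)
  moreover have "(P *v axis i 1)$i = P$i$i"
    unfolding matrix_vector_mult_def by (subst sum.remove[of _ i]) (auto simp: axis_def)
  ultimately show ?thesis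
    by (simp add: qform_def)
qed

lemma psd_diagonal:
  assumes "psd A"
  shows "0 \<le> Re (A$i$i)" and "Im (A$i$i) = 0"
proof -
  show "0 \<le> Re (A$i$i)"
    using psd_qform_nonneg[OF assms, of "axis i 1"] by (simp add: qform_axis)
  have "A$i$i = cnj (A$i$i)"
    using psd_hermitian[OF assms] hermitian_def by blast
  then show "Im (A$i$i) = 0"
    by (simp add: complex_eq_iff)
qed

lemma psd_trace_nonneg: "psd A \<Longrightarrow> 0 \<le> Re (trace A)"
  by (simp add: trace_def sum_nonneg psd_diagonal)

lemma psd_trace_real: "psd A \<Longrightarrow> trace A = of_real (Re (trace A))"
  by (simp add: trace_def complex_eq_iff psd_diagonal)

lemma quadratic_nonneg_discriminant:
  fixes a b c :: real
  assumes nonneg: "\<And>t. 0 \<le> a - 2 * t * b + t\<^sup>2 * c" and "0 \<le> c"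
  shows "b\<^sup>2 \<le> a * c"
proof (cases "c = 0")
  case True
  have "b = 0"
  proof (rule ccontr)
    assume "b \<noteq> 0"
    then have "a - 2 * ((a + 1) / (2 * b)) * b + ((a + 1) / (2 * b))\<^sup>2 * c = -1"
      using True by (simp add: field_simps)
    then show False
      using nonneg[of "(a + 1) / (2 * b)"] by simp
  qed
  with True show ?thesis
    by simp
next
  case False
  with \<open>0 \<le> c\<close> have "c > 0"
    by simp
  have "0 \<le> a - 2 * (b / c) * b + (b / c)\<^sup>2 * c"
    by (rule nonneg)
  also have "\<dots> = (a * c - b\<^sup>2) / c"
    using \<open>c > 0\<close> by (simp add: field_simps power2_eq_square)
  finally show ?thesis
    using \<open>c > 0\<close> by (simp add: zero_le_divide_iff)
qed

lemma psd_cauchy_schwarz: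
  assumes "psd P"
  shows "cmod (cinner x (P *v y)) \<le> sqrt (qform P x) * sqrt (qform P y)"
proof -
  have herm: "hermitian P"
    using assms by (rule psd_hermitian)
  define b where "b = cinner x (P *v y)"
  define B where "B = (cmod b)\<^sup>2"
  have yx: "cinner y (P *v x) = cnj b"
    by (simp add: b_def hermitian_cinner[OF herm] cnj_cinner)
  have "0 \<le> qform P x - 2 * t * B + t\<^sup>2 * (B * qform P y)" for t :: real
  proof -
    \<comment> \<open>the phase of \<open>s\<close> is chosen to make the cross term real\<close>
    define s where "s = - (of_real t * cnj b)"
    have "cinner (s *s y) (P *v x) = cnj s * cnj b"
      by (simp add: cinner_scale_left yx)
    also have "\<dots> = - of_real (t * B)"
      by (simp add: s_def B_def mult.assoc flip: complex_norm_square)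
    finally have sy: "cinner (s *s y) (P *v x) = - of_real (t * B)" .
    have "(cmod s)\<^sup>2 = t\<^sup>2 * B"
      by (simp add: s_def B_def norm_mult power_mult_distrib)
    then have "qform P (x + s *s y) = qform P x - 2 * t * B + t\<^sup>2 * (B * qform P y)"
      by (simp add: qform_add[OF herm] sy qform_smult)
    then show ?thesis
      using psd_qform_nonneg[OF assms] by metis
  qed
  then have "B\<^sup>2 \<le> qform P x * (B * qform P y)"
    by (rule quadratic_nonneg_discriminant)
      (simp add: B_def psd_qform_nonneg[OF assms])
  moreover have "B \<ge> 0"
    by (simp add: B_def)
  ultimately have "B \<le> qform P x * qform P y"
    using psd_qform_nonneg[OF assms, of x] psd_qform_nonneg[OF assms, of y]
    by (cases "B = 0") (simp_all add: power2_eq_square mult.left_commute)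
  then show ?thesis
    by (simp add: b_def B_def real_le_rsqrt flip: real_sqrt_mult)
qed

lemma qform_sum_le:
  assumes "psd P"
  shows "qform P (\<Sum>k\<in>K. x k) \<le> (\<Sum>k\<in>K. sqrt (qform P (x k)))\<^sup>2"
proof -
  have "qform P (\<Sum>k\<in>K. x k) = (\<Sum>l\<in>K. \<Sum>k\<in>K. Re (cinner (x k) (P *v x l)))"
    by (simp add: qform_def matrix_vector_mult_sum cinner_sum_left cinner_sum_right)
  also have "\<dots> \<le> (\<Sum>l\<in>K. \<Sum>k\<in>K. sqrt (qform P (x k)) * sqrt (qform P (x l)))"
    by (intro sum_mono) (meson complex_Re_le_cmod order_trans psd_cauchy_schwarz[OF assms])
  also have "\<dots> = (\<Sum>k\<in>K. sqrt (qform P (x k)))\<^sup>2"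
    by (simp add: power2_eq_square sum_product mult.commute)
  finally show ?thesis .
qed

lemma norm_vec_power2: "(norm (v::'a::real_normed_vector^'n))\<^sup>2 = (\<Sum>i\<in>UNIV. (norm (v$i))\<^sup>2)"
  by (simp add: norm_vec_def L2_set_def sum_nonneg)

lemma qform_le_trace:
  assumes "psd P"
  shows "qform P v \<le> Re (trace P) * (norm v)\<^sup>2"
proof -
  have "qform P v = qform P (\<Sum>i\<in>UNIV. v$i *s axis i 1)"
    by (simp add: basis_expansion)
  also have "\<dots> \<le> (\<Sum>i\<in>UNIV. cmod (v$i) * sqrt (Re (P$i$i)))\<^sup>2"
    using qform_sum_le[OF assms, of "\<lambda>i. v$i *s axis i 1" UNIV]
    by (simp add: qform_smult qform_axis real_sqrt_mult)
  also have "\<dots> \<le> (\<Sum>i\<in>UNIV. (cmod (v$i))\<^sup>2) * (\<Sum>i\<in>UNIV. (sqrt (Re (P$i$i)))\<^sup>2)"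
    by (rule Cauchy_Schwarz_ineq_sum)
  also have "\<dots> = (norm v)\<^sup>2 * Re (trace P)"
    using psd_diagonal[OF assms] by (simp add: norm_vec_power2 trace_def)
  finally show ?thesis
    by (simp add: mult.commute)
qed

lemma psd_trace_mat1_minus:
  assumes "psd P"
  shows "psd (Re (trace P) *\<^sub>R mat 1 - P)"
  using assms qform_le_trace[OF assms]
  by (simp add: psd_iff_qform hermitian_diff hermitian_scaleR hermitian_mat1
      qform_diff_matrix qform_scaleR_matrix qform_mat1)

section \<open>The spectral theorem\<close>

definition orthonormal_set :: "(complex^'n) set \<Rightarrow> bool" where
  "orthonormal_set S \<longleftrightarrow> (\<forall>s\<in>S. \<forall>t\<in>S. cinner s t = (if s = t then 1 else 0))"

lemma cinner_orthonormal_sum: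
  assumes "orthonormal_set S" "finite S" "t \<in> S"
  shows "cinner t (\<Sum>s\<in>S. c s *s s) = c t"
proof -
  have "cinner t (\<Sum>s\<in>S. c s *s s) = (\<Sum>s\<in>S. c s * cinner t s)"
    by (simp add: cinner_sum_right cinner_scale_right)
  also have "\<dots> = (\<Sum>s\<in>S. if s = t then c s else 0)"
    using assms(1,3) unfolding orthonormal_set_def by (intro sum.cong) auto
  also have "\<dots> = c t"
    using assms(2,3) by simp
  finally show ?thesis .
qed

lemma orthonormal_set_independent:
  assumes "orthonormal_set S" "finite S"
  shows "vec.independent S"
  unfolding vec.independent_explicit
proof (intro conjI allI impI ballI)
  fix c v
  assume "(\<Sum>v\<in>S. c v *s v) = 0" "v \<in> S"
  then show "c v = 0"
    using cinner_orthonormal_sum[OF assms \<open>v \<in> S\<close>, of c] by simp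
qed (fact assms(2))

lemma orthonormal_basis_expansion:
  fixes v :: "complex^'n"
  assumes S: "orthonormal_set S" "finite S" and card: "card S = CARD('n)"
  shows "v = (\<Sum>s\<in>S. cinner s v *s s)"
proof -
  have "UNIV \<subseteq> vec.span S"
    using vec.card_eq_dim[of S UNIV] orthonormal_set_independent[OF S] card S(2)
    by (simp add: vec_dim_card card_cart_basis)
  then obtain u where u: "v = (\<Sum>s\<in>S. u s *s s)"
    using vec.span_finite[OF S(2)] by auto
  have "(\<Sum>s\<in>S. cinner s v *s s) = (\<Sum>s\<in>S. u s *s s)"
    using cinner_orthonormal_sum[OF S] u by (intro sum.cong) auto
  with u show ?thesis
    by simp
qed

lemma orthonormal_set_complement_nonzero:
  assumes S: "orthonormal_set S" "finite S" and card: "card S < CARD('n)"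
  shows "\<exists>w::complex^'n. w \<noteq> 0 \<and> (\<forall>s\<in>S. cinner s w = 0)"
proof -
  have "vec.dim (vec.span S) = card S"
    using vec.dim_span_eq_card_independent[OF orthonormal_set_independent[OF S]] .
  then have "vec.span S \<noteq> UNIV"
    using card vec_dim_card by (metis less_irrefl)
  then obtain x :: "complex^'n" where x: "x \<notin> vec.span S"
    by auto
  define w where "w = x - (\<Sum>s\<in>S. cinner s x *s s)"
  have "(\<Sum>s\<in>S. cinner s x *s s) \<in> vec.span S"
    by (intro vec.span_sum vec.span_scale vec.span_base)
  with x have "w \<noteq> 0"
    by (auto simp: w_def)
  moreover have "cinner t w = 0" if "t \<in> S" for t
    using cinner_orthonormal_sum[OF S that, of "\<lambda>s. cinner s x"] by (simp add: w_def cinner_diff_right)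
  ultimately show ?thesis
    by blast
qed

lemma vec_subspace_scaleR: "vec.subspace W \<Longrightarrow> w \<in> W \<Longrightarrow> c *\<^sub>R (w::complex^'n) \<in> W"
  by (simp add: scaleR_vec_eq_smult vec.subspace_scale)

lemma rayleigh_maximizer_eigenvector:
  fixes X :: "complex^'n^'n"
  assumes herm: "hermitian X" and W: "vec.subspace W" and invariant: "\<And>w. w \<in> W \<Longrightarrow> X *v w \<in> W"
    and v: "v \<in> W" "norm v = 1"
    and max: "\<And>u. u \<in> W \<Longrightarrow> qform X u \<le> qform X v * (norm u)\<^sup>2"
  shows "X *v v = of_real (qform X v) *s v"
proof -
  define \<mu> where "\<mu> = qform X v"
  define r where "r = X *v v - of_real \<mu> *s v"
  have "r \<in> W"
    unfolding r_def using W invariant v by (intro vec.subspace_diff vec.subspace_scale) auto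
  have Re_orth: "Re (cinner w r) = 0" if w: "w \<in> W" for w
  proof -
    have "0 \<le> 0 - 2 * t * Re (cinner w r) + t\<^sup>2 * (\<mu> * (norm w)\<^sup>2 - qform X w)" for t :: real
    proof -
      have "v + t *\<^sub>R w \<in> W"
        using W v w by (simp add: vec_subspace_scaleR vec.subspace_add)
      then have "qform X (v + t *\<^sub>R w) \<le> \<mu> * (norm (v + t *\<^sub>R w))\<^sup>2"
        using max by (simp add: \<mu>_def)
      moreover have "qform X (v + t *\<^sub>R w) = \<mu> + t\<^sup>2 * qform X w + 2 * t * Re (cinner w (X *v v))"
        by (simp add: qform_add[OF herm] qform_scaleR cinner_scaleR_left \<mu>_def)
      moreover have "(norm (v + t *\<^sub>R w))\<^sup>2 = 1 + t\<^sup>2 * (norm w)\<^sup>2 + 2 * t * Re (cinner w v)"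
        using qform_add[OF hermitian_mat1, of v "t *\<^sub>R w"] v
        by (simp add: qform_scaleR qform_mat1 cinner_scaleR_left)
      moreover have "Re (cinner w (X *v v)) = Re (cinner w r) + \<mu> * Re (cinner w v)"
        by (simp add: r_def cinner_diff_right cinner_scale_right)
      ultimately show ?thesis
        by (simp add: algebra_simps)
    qed
    then have "(Re (cinner w r))\<^sup>2 \<le> 0 * (\<mu> * (norm w)\<^sup>2 - qform X w)"
      by (rule quadratic_nonneg_discriminant) (use max[OF w] in \<open>simp add: \<mu>_def\<close>)
    then show ?thesis
      by simp
  qed
  have "cinner w r = 0" if "w \<in> W" for w
  proof -
    have "Re (cinner (\<i> *s w) r) = 0"
      using W that by (intro Re_orth vec.subspace_scale)
    then show ?thesis
      using Re_orth[OF that] by (simp add: cinner_scale_left complex_eq_iff)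
  qed
  then have "r = 0"
    using \<open>r \<in> W\<close> cinner_self_eq_0 by blast
  then show ?thesis
    by (simp add: r_def \<mu>_def)
qed

lemma hermitian_eigenvector_orthogonal:
  fixes X :: "complex^'n^'n"
  assumes herm: "hermitian X" and S: "orthonormal_set S" "finite S" and card: "card S < CARD('n)"
    and eig: "\<And>s. s \<in> S \<Longrightarrow> X *v s = of_real (\<mu> s) *s s"
  shows "\<exists>v e. norm v = 1 \<and> (\<forall>s\<in>S. cinner s v = 0) \<and> X *v v = of_real e *s v"
proof -
  define W where "W = {v::complex^'n. \<forall>s\<in>S. cinner s v = 0}"
  have W: "vec.subspace W"
    by (simp add: vec.subspace_def W_def cinner_add_right cinner_scale_right)
  have invariant: "X *v w \<in> W" if "w \<in> W" for w
    using that eig by (simp add: W_def hermitian_cinner[OF herm] cinner_scale_left)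
  have "closed W"
    unfolding W_def Collect_ball_eq
    by (intro closed_INT ballI closed_Collect_eq continuous_on_const)
      (simp_all add: cinner_def continuous_intros)
  then have "compact (W \<inter> sphere 0 1)"
    by (intro closed_Int_compact compact_sphere)
  moreover obtain w0 where "w0 \<noteq> 0" "w0 \<in> W"
    using orthonormal_set_complement_nonzero[OF S card] by (auto simp: W_def)
  then have "(1 / norm w0) *\<^sub>R w0 \<in> W \<inter> sphere 0 1"
    using W by (simp add: vec_subspace_scaleR)
  ultimately obtain v where v: "v \<in> W \<inter> sphere 0 1"
    and v_max: "\<And>y. y \<in> W \<inter> sphere 0 1 \<Longrightarrow> qform X y \<le> qform X v"
    using continuous_attains_sup[OF _ _ continuous_on_qform] by (metis empty_iff)
  have "qform X u \<le> qform X v * (norm u)\<^sup>2" if "u \<in> W" for u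
  proof (cases "u = 0")
    case False
    then have "(1 / norm u) *\<^sub>R u \<in> W \<inter> sphere 0 1"
      using W that by (simp add: vec_subspace_scaleR)
    then have "qform X ((1 / norm u) *\<^sub>R u) \<le> qform X v"
      by (rule v_max)
    then have "qform X u / (norm u)\<^sup>2 \<le> qform X v"
      by (simp add: qform_scaleR power_divide)
    with False show ?thesis
      by (simp add: divide_le_eq mult.commute)
  qed (simp add: qform_def)
  with herm W invariant v have "X *v v = of_real (qform X v) *s v"
    by (intro rayleigh_maximizer_eigenvector) auto
  with v show ?thesis
    by (auto simp: W_def)
qed

theorem spectral_theorem:
  fixes X :: "complex^'n^'n"
  assumes herm: "hermitian X"
  shows "\<exists>S \<mu>. orthonormal_set S \<and> finite S \<and> card S = CARD('n) \<and>
    (\<forall>s\<in>S. X *v s = of_real (\<mu> s) *s s)"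
proof -
  have "\<exists>S \<mu>. orthonormal_set S \<and> finite S \<and> card S = m \<and> (\<forall>s\<in>S. X *v s = of_real (\<mu> s) *s s)"
    if "m \<le> CARD('n)" for m
    using that
  proof (induction m)
    case 0
    show ?case
      by (rule exI[of _ "{}"]) (simp add: orthonormal_set_def)
  next
    case (Suc m)
    then obtain S \<mu> where S: "orthonormal_set S" "finite S" "card S = m"
      and eig: "\<forall>s\<in>S. X *v s = of_real (\<mu> s) *s s"
      by auto
    obtain v e where v: "norm v = 1" "\<forall>s\<in>S. cinner s v = 0" "X *v v = of_real e *s v"
      using hermitian_eigenvector_orthogonal[OF herm S(1,2)] eig S(3) Suc.prems by fastforce
    have "v \<notin> S"
      using v(1,2) by (force simp: cinner_self)
    moreover have "orthonormal_set (insert v S)"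
      using S(1) v(1,2) unfolding orthonormal_set_def
      by (auto simp: cinner_self) (metis cnj_cinner complex_cnj_zero)
    ultimately show ?case
      using S eig v by (intro exI[of _ "insert v S"] exI[of _ "\<mu>(v := e)"]) auto
  qed
  then show ?thesis
    by blast
qed

section \<open>The positive part of a Hermitian matrix\<close>

definition outer :: "complex^'n \<Rightarrow> complex^'n^'n" where
  "outer s = (\<chi> i j. s$i * cnj (s$j))"

lemma outer_vector_mult: "outer s *v w = cinner s w *s s"
  by (simp add: vec_eq_iff outer_def matrix_vector_mult_def cinner_def sum_distrib_left mult_ac)

lemma psd_outer: "psd (outer s)"
proof -
  have "hermitian (outer s)"
    by (simp add: hermitian_def outer_def mult.commute)
  moreover have "qform (outer s) w = (cmod (cinner s w))\<^sup>2" for w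
  proof -
    have "cinner w s = cnj (cinner s w)"
      by (simp add: cnj_cinner)
    then show ?thesis
      by (simp add: qform_def outer_vector_mult cinner_scale_right flip: complex_norm_square)
  qed
  ultimately show ?thesis
    by (simp add: psd_iff_qform)
qed

lemma matrix_eq_on_orthonormal_basis:
  fixes A B :: "complex^'n^'n"
  assumes S: "orthonormal_set S" "finite S" "card S = CARD('n)"
    and eq: "\<And>s. s \<in> S \<Longrightarrow> A *v s = B *v s"
  shows "A = B"
  unfolding matrix_eq
proof
  fix w
  have "A *v w = (\<Sum>s\<in>S. cinner s w *s (A *v s))"
    by (subst orthonormal_basis_expansion[OF S, of w])
      (simp add: matrix_vector_mult_sum matrix_vector_mult_smult)
  also have "\<dots> = (\<Sum>s\<in>S. cinner s w *s (B *v s))"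
    using eq by simp
  also have "\<dots> = B *v w"
    by (subst (2) orthonormal_basis_expansion[OF S, of w])
      (simp add: matrix_vector_mult_sum matrix_vector_mult_smult)
  finally show "A *v w = B *v w" .
qed

lemma outer_sum_vector_mult:
  assumes "orthonormal_set S" "finite S" "t \<in> S"
  shows "(\<Sum>s\<in>S. c s *\<^sub>R outer s) *v t = c t *\<^sub>R t"
proof -
  have "(\<Sum>s\<in>S. c s *\<^sub>R outer s) *v t = (\<Sum>s\<in>S. c s *\<^sub>R (cinner s t *s s))"
    by (simp add: matrix_sum_vector_mult matrix_scaleR_vector_mult outer_vector_mult)
  also have "\<dots> = (\<Sum>s\<in>S. if s = t then c t *\<^sub>R t else 0)"
    using assms(1,3) unfolding orthonormal_set_def by (intro sum.cong) auto
  finally show ?thesis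
    using assms(2,3) by simp
qed

lemma psd_outer_sum: "(\<And>s. s \<in> S \<Longrightarrow> 0 \<le> c s) \<Longrightarrow> psd (\<Sum>s\<in>S. c s *\<^sub>R outer s)"
  by (intro psd_sum psd_scaleR psd_outer)

lemma positive_part_on_eigenvector:
  fixes X P :: "complex^'n^'n"
  assumes herm: "hermitian X" and P: "psd P" "psd (P - X)" "P ** (P - X) = 0"
    and eig: "X *v u = of_real \<mu> *s u"
  shows "P *v u = of_real (max \<mu> 0) *s u"
proof -
  define N where "N = P - X"
  have PN: "P *v (N *v w) = 0" for w
    using P(3) by (simp add: matrix_vector_mul_assoc N_def)
  show ?thesis
  proof (cases "\<mu> \<le> 0")
    case True
    have "(norm (P *v u))\<^sup>2 = Re (cinner u (P *v (P *v u)))"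
      by (simp add: hermitian_cinner[OF psd_hermitian[OF P(1)]] cinner_self)
    also have "P *v (P *v u) = P *v (X *v u)"
      using PN[of u] by (simp add: N_def matrix_vector_mult_diff_rdistrib matrix_vector_mult_diff_distrib)
    also have "Re (cinner u (P *v (X *v u))) = \<mu> * qform P u"
      by (simp add: eig matrix_vector_mult_smult cinner_scale_right qform_def)
    also have "\<dots> \<le> 0"
      using True psd_qform_nonneg[OF P(1)] by (simp add: mult_nonpos_nonneg)
    finally have "P *v u = 0"
      by simp
    with True show ?thesis
      by simp
  next
    case False
    have "N *v (N *v u) = - (X *v (N *v u))"
      using PN[of u] by (simp add: N_def matrix_vector_mult_diff_rdistrib)
    moreover have "hermitian N"
      using P(2) by (simp add: N_def psd_hermitian)
    ultimately have NN: "of_real ((norm (N *v u))\<^sup>2) = - cinner u (X *v (N *v u))"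
      using hermitian_cinner[of N u "N *v u"] by (simp add: cinner_self cinner_minus_right)
    have "(norm (N *v u))\<^sup>2 = - Re (cinner u (X *v (N *v u)))"
      using arg_cong[where f = Re, OF NN] by simp
    also have "\<dots> = - Re (cinner (X *v u) (N *v u))"
      by (simp add: hermitian_cinner[OF herm])
    also have "\<dots> = - (\<mu> * qform N u)"
      by (simp add: eig cinner_scale_left qform_def)
    also have "\<dots> \<le> 0"
      using False psd_qform_nonneg[OF P(2)] by (simp add: N_def)
    finally have "P *v u = X *v u"
      by (simp add: N_def matrix_vector_mult_diff_rdistrib)
    with False eig show ?thesis
      by simp
  qed
qed

text \<open>Uniqueness matters because \<open>pos_part\<close> is defined by a definite description.\<close>

lemma jordan_decomposition:
  fixes X :: "complex^'n^'n"
  assumes herm: "hermitian X"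
  shows "\<exists>!P. psd P \<and> psd (P - X) \<and> P ** (P - X) = 0"
proof -
  obtain S \<mu> where S: "orthonormal_set S" "finite S" "card S = CARD('n)"
    and eig: "\<forall>s\<in>S. X *v s = of_real (\<mu> s) *s s"
    using spectral_theorem[OF herm] by blast
  define P where "P = (\<Sum>s\<in>S. max (\<mu> s) 0 *\<^sub>R outer s)"
  define N where "N = (\<Sum>s\<in>S. max (- \<mu> s) 0 *\<^sub>R outer s)"
  have P_eig: "P *v s = of_real (max (\<mu> s) 0) *s s" if "s \<in> S" for s
    using outer_sum_vector_mult[OF S(1,2) that] by (simp add: P_def scaleR_vec_eq_smult)
  have N_eig: "N *v s = of_real (max (- \<mu> s) 0) *s s" if "s \<in> S" for s
    using outer_sum_vector_mult[OF S(1,2) that] by (simp add: N_def scaleR_vec_eq_smult)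
  have "P - X = N"
  proof (rule matrix_eq_on_orthonormal_basis[OF S])
    fix s
    assume "s \<in> S"
    then have "(P - X) *v s = of_real (max (\<mu> s) 0 - \<mu> s) *s s"
      using eig P_eig by (simp add: matrix_vector_mult_diff_rdistrib vector_sub_rdistrib)
    also have "max (\<mu> s) 0 - \<mu> s = max (- \<mu> s) 0"
      by (simp add: max_def)
    finally show "(P - X) *v s = N *v s"
      using N_eig \<open>s \<in> S\<close> by simp
  qed
  moreover have "P ** N = 0"
  proof (rule matrix_eq_on_orthonormal_basis[OF S])
    fix s
    assume "s \<in> S"
    then have "(P ** N) *v s = of_real (max (- \<mu> s) 0) *s (P *v s)"
      by (simp add: N_eig matrix_vector_mult_smult flip: matrix_vector_mul_assoc)
    also have "\<dots> = of_real (max (- \<mu> s) 0 * max (\<mu> s) 0) *s s"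
      using \<open>s \<in> S\<close> by (simp add: P_eig vector_smult_assoc)
    also have "\<dots> = 0 *v s"
      by (simp add: max_def)
    finally show "(P ** N) *v s = 0 *v s" .
  qed
  moreover have "psd P" "psd N"
    unfolding P_def N_def by (rule psd_outer_sum, simp)+
  moreover have "Q = P" if Q: "psd Q" "psd (Q - X)" "Q ** (Q - X) = 0" for Q
  proof (rule matrix_eq_on_orthonormal_basis[OF S])
    fix s
    assume "s \<in> S"
    then show "Q *v s = P *v s"
      using positive_part_on_eigenvector[OF herm Q] eig P_eig by simp
  qed
  ultimately show ?thesis
    by (intro ex1I[of _ P]) blast+
qed

lemma pos_part_psd:
  assumes "hermitian X"
  shows "psd (pos_part X)" and "psd (pos_part X - X)"
  using theI'[OF jordan_decomposition[OF assms]] by (simp_all add: pos_part_def)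

section \<open>Partial trace over the first factor\<close>

lemma sum_UNIV_prod:
  "(\<Sum>p\<in>(UNIV::('a::finite \<times> 'b::finite) set). f p) = (\<Sum>a\<in>UNIV. \<Sum>b\<in>UNIV. f (a, b))"
  by (simp add: sum.cartesian_product)

definition slice :: "'a::finite \<Rightarrow> complex^('a \<times> 'b::finite) \<Rightarrow> complex^'b" where
  "slice a v = (\<chi> b. v$(a, b))"

definition axis_tensor :: "'a::finite \<Rightarrow> complex^'b::finite \<Rightarrow> complex^('a \<times> 'b)" where
  "axis_tensor c w = (\<chi> p. if fst p = c then w$(snd p) else 0)"

definition partial_trace_A :: "complex^('a::finite \<times> 'b::finite)^('a \<times> 'b) \<Rightarrow> complex^'b^'b" where
  "partial_trace_A P = (\<chi> b b'. \<Sum>a\<in>UNIV. P$(a, b)$(a, b'))"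

lemma sum_axis_tensor_slice: "(\<Sum>a\<in>UNIV. axis_tensor a (slice a v)) = v"
  by (simp add: vec_eq_iff sum_component axis_tensor_def slice_def if_distrib cong: if_cong)

lemma id_tensor_add: "id_tensor (A + B) = id_tensor A + id_tensor B"
  by (simp add: vec_eq_iff id_tensor_def)

lemma id_tensor_scaleR: "id_tensor ((c::real) *\<^sub>R A) = c *\<^sub>R id_tensor A"
  by (simp add: vec_eq_iff id_tensor_def matrix_scaleR_nth)

lemma id_tensor_mat1: "id_tensor (mat 1) = mat 1"
  by (auto simp: vec_eq_iff id_tensor_def mat_def prod_eq_iff)

lemma trace_scaleR: "trace ((c::real) *\<^sub>R (A::complex^'n^'n)) = of_real c * trace A"
  by (simp only: trace_def matrix_scaleR_nth) (simp add: sum_distrib_left)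

lemma trace_id_tensor:
  "trace (id_tensor M :: complex^('a::finite \<times> 'b::finite)^('a \<times> 'b)) = of_nat CARD('a) * trace M"
  by (simp add: trace_def sum_UNIV_prod id_tensor_def)

lemma trace_partial_trace_A: "trace (partial_trace_A P) = trace P"
  by (simp add: trace_def partial_trace_A_def sum_UNIV_prod) (rule sum.swap)

lemma hermitian_id_tensor:
  assumes "hermitian M"
  shows "hermitian (id_tensor M :: complex^('a::finite \<times> 'b::finite)^('a \<times> 'b))"
  unfolding hermitian_def
proof (intro allI)
  fix p q :: "'a \<times> 'b"
  have "M$(snd p)$(snd q) = cnj (M$(snd q)$(snd p))"
    using assms hermitian_def by blast
  then show "id_tensor M $ p $ q = cnj (id_tensor M $ q $ p)"
    by (simp add: id_tensor_def)
qed

lemma hermitian_partial_trace_A: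
  assumes "hermitian P"
  shows "hermitian (partial_trace_A P)"
  unfolding hermitian_def
proof (intro allI)
  fix b b'
  have "P$(a, b)$(a, b') = cnj (P$(a, b')$(a, b))" for a
    using assms hermitian_def by blast
  then show "partial_trace_A P $ b $ b' = cnj (partial_trace_A P $ b' $ b)"
    by (simp add: partial_trace_A_def)
qed

lemma qform_id_tensor: "qform (id_tensor M) v = (\<Sum>a\<in>UNIV. qform M (slice a v))"
proof -
  have "cinner v (id_tensor M *v v) = (\<Sum>a\<in>UNIV. cinner (slice a v) (M *v slice a v))"
    by (simp add: cinner_matrix_vector_mult sum_UNIV_prod id_tensor_def slice_def
        if_distrib if_distribR sum.If_cases)
  then show ?thesis
    by (simp add: qform_def)
qed

lemma qform_partial_trace_A: "qform (partial_trace_A P) w = (\<Sum>c\<in>UNIV. qform P (axis_tensor c w))"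
proof -
  have "cinner w (partial_trace_A P *v w) =
      (\<Sum>i\<in>UNIV. \<Sum>j\<in>UNIV. \<Sum>c\<in>UNIV. cnj (w$i) * P$(c, i)$(c, j) * w$j)"
    by (simp add: cinner_matrix_vector_mult partial_trace_A_def sum_distrib_left sum_distrib_right)
  also have "\<dots> = (\<Sum>i\<in>UNIV. \<Sum>c\<in>UNIV. \<Sum>j\<in>UNIV. cnj (w$i) * P$(c, i)$(c, j) * w$j)"
    by (intro sum.cong refl sum.swap)
  also have "\<dots> = (\<Sum>c\<in>UNIV. \<Sum>i\<in>UNIV. \<Sum>j\<in>UNIV. cnj (w$i) * P$(c, i)$(c, j) * w$j)"
    by (rule sum.swap)
  also have "\<dots> = (\<Sum>c\<in>UNIV. cinner (axis_tensor c w) (P *v axis_tensor c w))"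
    by (simp add: cinner_matrix_vector_mult sum_UNIV_prod axis_tensor_def
        if_distrib if_distribR sum.If_cases)
  finally show ?thesis
    by (simp add: qform_def)
qed

lemma psd_partial_trace_A: "psd P \<Longrightarrow> psd (partial_trace_A P)"
  by (simp add: psd_iff_qform hermitian_partial_trace_A qform_partial_trace_A sum_nonneg)

lemma psd_id_tensor_partial_trace_A_minus:
  fixes P :: "complex^('a::finite \<times> 'b::finite)^('a \<times> 'b)"
  assumes "psd P"
  shows "psd (id_tensor (real CARD('a) *\<^sub>R partial_trace_A P) - P)"
proof -
  have "qform P v \<le> real CARD('a) * qform (id_tensor (partial_trace_A P)) v" for v
  proof -
    have "qform P v = qform P (\<Sum>a\<in>UNIV. axis_tensor a (slice a v))"
      by (simp add: sum_axis_tensor_slice)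
    also have "\<dots> \<le> (\<Sum>a\<in>UNIV. sqrt (qform P (axis_tensor a (slice a v))))\<^sup>2"
      by (rule qform_sum_le[OF assms])
    also have "\<dots> \<le> (\<Sum>a\<in>UNIV. (sqrt (qform P (axis_tensor a (slice a v))))\<^sup>2) * real CARD('a)"
      by (rule sum_squared_le_sum_of_squares)
    also have "\<dots> = real CARD('a) * (\<Sum>a\<in>UNIV. qform P (axis_tensor a (slice a v)))"
      using psd_qform_nonneg[OF assms] by (simp add: mult.commute)
    also have "\<dots> \<le> real CARD('a) * (\<Sum>a\<in>UNIV. \<Sum>c\<in>UNIV. qform P (axis_tensor c (slice a v)))"
      by (intro mult_left_mono sum_mono member_le_sum psd_qform_nonneg[OF assms]) auto
    also have "\<dots> = real CARD('a) * qform (id_tensor (partial_trace_A P)) v"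
      by (simp add: qform_id_tensor qform_partial_trace_A)
    finally show ?thesis .
  qed
  with assms show ?thesis
    by (simp add: psd_iff_qform hermitian_diff hermitian_id_tensor hermitian_scaleR
        hermitian_partial_trace_A id_tensor_scaleR qform_diff_matrix qform_scaleR_matrix)
qed

lemma id_tensor_dominating:
  fixes P :: "complex^('a::finite \<times> 'b::finite)^('a \<times> 'b)"
  assumes "psd P"
  shows "\<exists>\<omega>::complex^'b^'b. psd \<omega> \<and> Re (trace \<omega>) = real (min CARD('a) CARD('b)) * Re (trace P)
    \<and> psd (id_tensor \<omega> - P)"
proof (cases "CARD('a) \<le> CARD('b)")
  case True
  then show ?thesis
    using assms psd_id_tensor_partial_trace_A_minus[OF assms]
    by (intro exI[of _ "real CARD('a) *\<^sub>R partial_trace_A P"])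
      (simp add: psd_scaleR psd_partial_trace_A trace_scaleR trace_partial_trace_A)
next
  case False
  then show ?thesis
    using assms psd_trace_mat1_minus[OF assms]
    by (intro exI[of _ "Re (trace P) *\<^sub>R mat 1"])
      (simp add: psd_scaleR psd_mat1 psd_trace_nonneg trace_scaleR trace_I id_tensor_scaleR id_tensor_mat1)
qed

section \<open>Continuity of the conditional min-entropy\<close>

definition Hmin_feasible :: "complex^('a::finite \<times> 'b::finite)^('a \<times> 'b) \<Rightarrow> real set" where
  "Hmin_feasible \<rho> = {l. \<exists>\<sigma>::complex^'b^'b. norm_state \<sigma> \<and>
     psd ((2 powr (-l)) *\<^sub>R (id_tensor \<sigma> :: complex^('a \<times> 'b)^('a \<times> 'b)) - \<rho>)}"

lemma Hmin_eq_Sup: "Hmin \<rho> = Sup (Hmin_feasible \<rho>)"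
  by (simp add: Hmin_def Hmin_feasible_def)

lemma Hmin_feasible_bound:
  fixes \<rho> :: "complex^('a::finite \<times> 'b::finite)^('a \<times> 'b)"
  assumes "l \<in> Hmin_feasible \<rho>"
  shows "2 powr l * Re (trace \<rho>) \<le> real CARD('a)"
proof -
  obtain \<sigma> :: "complex^'b^'b" where \<sigma>: "norm_state \<sigma>"
    and dom: "psd ((2 powr (-l)) *\<^sub>R (id_tensor \<sigma> :: complex^('a \<times> 'b)^('a \<times> 'b)) - \<rho>)"
    using assms by (auto simp: Hmin_feasible_def)
  have "0 \<le> Re (trace ((2 powr (-l)) *\<^sub>R (id_tensor \<sigma> :: complex^('a \<times> 'b)^('a \<times> 'b)) - \<rho>))"
    using dom by (rule psd_trace_nonneg)
  also have "\<dots> = 2 powr (-l) * real CARD('a) - Re (trace \<rho>)"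
    using \<sigma> by (simp add: trace_sub trace_scaleR trace_id_tensor norm_state_def)
  finally have "Re (trace \<rho>) \<le> 2 powr (-l) * real CARD('a)"
    by simp
  then show ?thesis
    by (simp add: powr_minus field_simps)
qed

lemma bdd_above_Hmin_feasible:
  fixes \<rho> :: "complex^('a::finite \<times> 'b::finite)^('a \<times> 'b)"
  assumes "0 < Re (trace \<rho>)"
  shows "bdd_above (Hmin_feasible \<rho>)"
proof (rule bdd_aboveI)
  fix l
  assume "l \<in> Hmin_feasible \<rho>"
  then have "2 powr l \<le> real CARD('a) / Re (trace \<rho>)"
    using Hmin_feasible_bound assms by (simp add: le_divide_eq)
  then show "l \<le> log 2 (real CARD('a) / Re (trace \<rho>))"
    using assms by (simp add: le_log_iff)
qed

lemma Hmin_feasible_nonempty: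
  fixes \<rho> :: "complex^('a::finite \<times> 'b::finite)^('a \<times> 'b)"
  assumes "psd \<rho>" and "0 < Re (trace \<rho>)"
  shows "Hmin_feasible \<rho> \<noteq> {}"
proof -
  define d where "d = real CARD('b)"
  define \<sigma> :: "complex^'b^'b" where "\<sigma> = (1 / d) *\<^sub>R mat 1"
  define l where "l = - log 2 (Re (trace \<rho>) * d)"
  have "d > 0"
    by (simp add: d_def)
  then have "norm_state \<sigma>"
    by (simp add: norm_state_def \<sigma>_def psd_scaleR psd_mat1 trace_scaleR trace_I d_def)
  moreover have "(2 powr (-l)) *\<^sub>R (id_tensor \<sigma> :: complex^('a \<times> 'b)^('a \<times> 'b)) = Re (trace \<rho>) *\<^sub>R mat 1"
    using assms(2) \<open>d > 0\<close> by (simp add: l_def \<sigma>_def id_tensor_scaleR id_tensor_mat1)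
  ultimately have "l \<in> Hmin_feasible \<rho>"
    using psd_trace_mat1_minus[OF assms(1)] by (auto simp: Hmin_feasible_def)
  then show ?thesis
    by auto
qed

lemma Hmin_feasible_mix:
  fixes \<rho> \<tau> :: "complex^('a::finite \<times> 'b::finite)^('a \<times> 'b)"
  assumes l: "l \<in> Hmin_feasible \<rho>" and \<omega>: "psd \<omega>" and dom: "psd (id_tensor \<omega> - (\<tau> - \<rho>))"
  shows "- log 2 (2 powr (-l) + Re (trace \<omega>)) \<in> Hmin_feasible \<tau>"
proof -
  obtain \<sigma> :: "complex^'b^'b" where \<sigma>: "norm_state \<sigma>"
    and dom_\<sigma>: "psd ((2 powr (-l)) *\<^sub>R (id_tensor \<sigma> :: complex^('a \<times> 'b)^('a \<times> 'b)) - \<rho>)"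
    using l by (auto simp: Hmin_feasible_def)
  define c where "c = 2 powr (-l) + Re (trace \<omega>)"
  have "c > 0"
    using psd_trace_nonneg[OF \<omega>] by (simp add: c_def add_pos_nonneg)
  define \<sigma>' where "\<sigma>' = (1 / c) *\<^sub>R ((2 powr (-l)) *\<^sub>R \<sigma> + \<omega>)"
  have "norm_state \<sigma>'"
    unfolding norm_state_def
  proof
    show "psd \<sigma>'"
      using \<sigma> \<omega> \<open>c > 0\<close> by (simp add: \<sigma>'_def norm_state_def psd_scaleR psd_add)
    have "trace \<sigma>' = of_real (1 / c) * (of_real (2 powr (-l)) * 1 + of_real (Re (trace \<omega>)))"
      using \<sigma> psd_trace_real[OF \<omega>] by (simp add: \<sigma>'_def trace_scaleR trace_add norm_state_def)
    also have "\<dots> = of_real (1 / c) * of_real c"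
      by (simp add: c_def)
    also have "\<dots> = 1"
      using \<open>c > 0\<close> by (simp flip: of_real_mult)
    finally show "trace \<sigma>' = 1" .
  qed
  moreover have "c *\<^sub>R (id_tensor \<sigma>' :: complex^('a \<times> 'b)^('a \<times> 'b)) - \<tau> =
      ((2 powr (-l)) *\<^sub>R id_tensor \<sigma> - \<rho>) + (id_tensor \<omega> - (\<tau> - \<rho>))"
    using \<open>c > 0\<close> by (simp add: \<sigma>'_def id_tensor_scaleR id_tensor_add algebra_simps)
  then have "psd (c *\<^sub>R (id_tensor \<sigma>' :: complex^('a \<times> 'b)^('a \<times> 'b)) - \<tau>)"
    using psd_add[OF dom_\<sigma> dom] by (simp only:)
  moreover have "2 powr (- (- log 2 c)) = c"
    using \<open>c > 0\<close> by simp
  ultimately show ?thesis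
    unfolding Hmin_feasible_def c_def[symmetric] by auto
qed

lemma log2_mix_le:
  fixes l t :: real
  assumes "0 \<le> t"
  shows "l - (- log 2 (2 powr (-l) + t)) \<le> 2 powr l * t / ln 2"
proof -
  have "0 < 2 powr (-l) + t"
    using assms by (simp add: add_pos_nonneg)
  then have "l - (- log 2 (2 powr (-l) + t)) = log 2 (2 powr l * (2 powr (-l) + t))"
    by (simp add: log_mult)
  also have "\<dots> = ln (1 + 2 powr l * t) / ln 2"
    by (simp add: log_def distrib_left powr_minus)
  also have "\<dots> \<le> 2 powr l * t / ln 2"
    using assms by (intro divide_right_mono ln_add_one_self_le_self) auto
  finally show ?thesis .
qed

lemma Hmin_diff_le_pos_part:
  fixes \<rho> \<tau> :: "complex^('a::finite \<times> 'b::finite)^('a \<times> 'b)"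
  assumes \<rho>: "subnorm_state \<rho>" and \<tau>: "subnorm_state \<tau>"
  shows "Hmin \<rho> - Hmin \<tau> \<le> real CARD('a) * real (min CARD('a) CARD('b)) * Re (trace (pos_part (\<tau> - \<rho>)))
    / (ln 2 * Re (trace \<rho>))"
    (is "_ \<le> ?R")
proof -
  have psd: "psd \<rho>" "psd \<tau>" and tr: "0 < Re (trace \<rho>)" "0 < Re (trace \<tau>)"
    using \<rho> \<tau> by (auto simp: subnorm_state_def)
  define P where "P = pos_part (\<tau> - \<rho>)"
  have P: "psd P" "psd (P - (\<tau> - \<rho>))"
    unfolding P_def using psd by (simp_all add: pos_part_psd hermitian_diff psd_hermitian)
  obtain \<omega> :: "complex^'b^'b" where \<omega>: "psd \<omega>" "psd (id_tensor \<omega> - P)"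
    and tr_\<omega>: "Re (trace \<omega>) = real (min CARD('a) CARD('b)) * Re (trace P)"
    using id_tensor_dominating[OF P(1)] by blast
  have dom: "psd (id_tensor \<omega> - (\<tau> - \<rho>))"
    using \<omega>(2) P(2) by (rule psd_diff_trans)
  have "l \<le> Hmin \<tau> + ?R" if l: "l \<in> Hmin_feasible \<rho>" for l
  proof -
    have "- log 2 (2 powr (-l) + Re (trace \<omega>)) \<le> Hmin \<tau>"
      unfolding Hmin_eq_Sup using Hmin_feasible_mix[OF l \<omega>(1) dom] bdd_above_Hmin_feasible[OF tr(2)]
      by (rule cSup_upper)
    moreover have "l - (- log 2 (2 powr (-l) + Re (trace \<omega>))) \<le> 2 powr l * Re (trace \<omega>) / ln 2"
      using psd_trace_nonneg[OF \<omega>(1)] by (rule log2_mix_le)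
    moreover have "2 powr l * Re (trace \<omega>) / ln 2 \<le> real CARD('a) / Re (trace \<rho>) * Re (trace \<omega>) / ln 2"
      using Hmin_feasible_bound[OF l] tr(1) psd_trace_nonneg[OF \<omega>(1)]
      by (intro divide_right_mono mult_right_mono) (simp_all add: le_divide_eq)
    moreover have "real CARD('a) / Re (trace \<rho>) * Re (trace \<omega>) / ln 2 = ?R"
      by (simp add: tr_\<omega> P_def mult_ac)
    ultimately show ?thesis
      by linarith
  qed
  then have "Hmin \<rho> \<le> Hmin \<tau> + ?R"
    unfolding Hmin_eq_Sup[of \<rho>] by (intro cSup_least Hmin_feasible_nonempty psd tr)
  then show ?thesis
    by simp
qed

lemma Hmin_diff_le:
  fixes \<rho> \<tau> :: "complex^('a::finite \<times> 'b::finite)^('a \<times> 'b)"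
  assumes \<rho>: "subnorm_state \<rho>" and \<tau>: "subnorm_state \<tau>"
  shows "Hmin \<rho> - Hmin \<tau> \<le> real CARD('a) * real (min CARD('a) CARD('b)) * gen_trace_dist \<rho> \<tau>
    / (ln 2 * min (Re (trace \<rho>)) (Re (trace \<tau>)))"
proof -
  define C where "C = real CARD('a) * real (min CARD('a) CARD('b))"
  define \<delta> where "\<delta> = Re (trace (pos_part (\<tau> - \<rho>)))"
  have "0 \<le> \<delta>"
    using \<rho> \<tau> unfolding \<delta>_def subnorm_state_def
    by (intro psd_trace_nonneg pos_part_psd hermitian_diff psd_hermitian) auto
  moreover have "\<delta> \<le> gen_trace_dist \<rho> \<tau>"
    by (simp add: \<delta>_def gen_trace_dist_def)
  moreover have "0 < min (Re (trace \<rho>)) (Re (trace \<tau>))"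
    using \<rho> \<tau> by (simp add: subnorm_state_def)
  ultimately have "C * \<delta> / (ln 2 * Re (trace \<rho>)) \<le>
      C * gen_trace_dist \<rho> \<tau> / (ln 2 * min (Re (trace \<rho>)) (Re (trace \<tau>)))"
    by (intro frac_le mult_left_mono mult_nonneg_nonneg) (simp_all add: C_def)
  with Hmin_diff_le_pos_part[OF \<rho> \<tau>] show ?thesis
    by (simp add: C_def \<delta>_def)
qed

theorem lemma11:
  fixes \<rho> \<tau> :: "complex^('a::finite \<times> 'b::finite)^('a \<times> 'b)"
  assumes "subnorm_state \<rho>" and "subnorm_state \<tau>"
  shows "\<bar>Hmin \<rho> - Hmin \<tau>\<bar> \<le>
    real CARD('a) * real (min CARD('a) CARD('b)) * gen_trace_dist \<rho> \<tau>
      / (ln 2 * min (Re (trace \<rho>)) (Re (trace \<tau>)))"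
proof -
  have "gen_trace_dist \<tau> \<rho> = gen_trace_dist \<rho> \<tau>"
    by (simp add: gen_trace_dist_def max.commute)
  then show ?thesis
    using Hmin_diff_le[OF assms] Hmin_diff_le[OF assms(2,1)]
    by (simp add: abs_le_iff min.commute)
qed

end
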